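(* Let $R$ be a commutative ring and $\mathcal{A}=\{L_1,\dots,L_n\}$ an arrangement of affine lines in $\mathbb{C}^2$ with parallel class decomposition $\mathcal{A}=\mathcal{A}_1\sqcup\dots\sqcup\mathcal{A}_s$. Let $\mathcal{C}_s$ be an arrangement of $s$ distinct lines through the origin of $\mathbb{C}^2$, with Orlik–Solomon generators $\tilde e_1,\dots,\tilde e_s$. Then there exists an $R$-algebra homomorphism $\Delta_{tot}:A^*_R(\mathcal{A})\to A^*_R(\mathcal{C}_s)$ with $\Delta_{tot}(e_i)=\tilde e_\alpha$ whenever $L_i\in\mathcal{A}_\alpha$ ($1\le\alpha\le s$).
   Context: The parallel class decomposition is the partition of $\mathcal{A}$ into classes such that two lines are parallel (including equal direction) iff they lie in the same class $\mathcal{A}_\alpha$. The Orlik–Solomon algebra $A^*_R(\mathcal{A})$ of an arrangement $\mathcal{A}=\{L_1,\dots,L_n\}$ of affine lines in $\mathbb{C}^2$ over a commutative ring $R$ is the graded $R$-algebra with $A^0_R=R$, $A^1_R=\bigoplus_{i=1}^n R e_i$, $A^2_R=\bigwedge^2 A^1_R/I$ where $I$ is the $R$-submodule generated by (i) $e_i\wedge e_j$ for each pair of parallel lines $L_i\parallel L_j$ and (ii) $e_i\wedge e_j-e_i\wedge e_k+e_j\wedge e_k$ for each triple of lines with $L_i\cap L_j\cap L_k\neq\emptyset$, and $A^q_R=0$ for $q\ge3$; multiplication is the wedge product. *)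

theory Defs
  imports Complex_Main "HOL-Algebra.QuotRing"
begin

type_synonym cpoint = "complex \<times> complex"

definition affine_line :: "cpoint set \<Rightarrow> bool" where
  "affine_line S \<longleftrightarrow>
     (\<exists>a b c :: complex. (a, b) \<noteq> (0, 0) \<and> S = {(x, y). a * x + b * y = c})"

definition parallel :: "cpoint set \<Rightarrow> cpoint set \<Rightarrow> bool" where
  "parallel S T \<longleftrightarrow> (\<exists>t1 t2 :: complex. T = (\<lambda>(x, y). (x + t1, y + t2)) ` S)"

definition line_arrangement :: "nat \<Rightarrow> (nat \<Rightarrow> cpoint set) \<Rightarrow> bool" where
  "line_arrangement n L \<longleftrightarrow> (\<forall>i<n. affine_line (L i)) \<and> inj_on L {..<n}"

definition central_arrangement :: "nat \<Rightarrow> (nat \<Rightarrow> cpoint set) \<Rightarrow> bool" where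
  "central_arrangement s C \<longleftrightarrow> line_arrangement s C \<and> (\<forall>a<s. (0, 0) \<in> C a)"

text \<open>Parallel class decomposition A = A_0 \<sqcup> ... \<sqcup> A_(s-1), encoded by the class
  label cls i of each line: two lines are parallel iff they lie in the same class,
  and every class is nonempty.\<close>
definition parallel_class_decomposition ::
  "nat \<Rightarrow> (nat \<Rightarrow> cpoint set) \<Rightarrow> nat \<Rightarrow> (nat \<Rightarrow> nat) \<Rightarrow> bool" where
  "parallel_class_decomposition n L s cls \<longleftrightarrow>
     (\<forall>i<n. cls i < s) \<and> (\<forall>a<s. \<exists>i<n. cls i = a) \<and>
     (\<forall>i<n. \<forall>j<n. cls i = cls j \<longleftrightarrow> parallel (L i) (L j))"

text \<open>An element is (c, v, w): c in degree 0, v i = coefficient of e_i,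
  w i j (i < j) = coefficient of e_i \<and> e_j.\<close>
type_synonym 'r ostriple = "'r \<times> (nat \<Rightarrow> 'r) \<times> (nat \<Rightarrow> nat \<Rightarrow> 'r)"

definition ext_carrier :: "nat \<Rightarrow> ('r::comm_ring_1) ostriple set" where
  "ext_carrier n = {(c, v, w). (\<forall>i. n \<le> i \<longrightarrow> v i = 0) \<and>
                                (\<forall>i j. \<not> (i < j \<and> j < n) \<longrightarrow> w i j = 0)}"

definition wedge :: "nat \<Rightarrow> (nat \<Rightarrow> 'r::comm_ring_1) \<Rightarrow> (nat \<Rightarrow> 'r) \<Rightarrow> nat \<Rightarrow> nat \<Rightarrow> 'r" where
  "wedge n v v' = (\<lambda>i j. if i < j \<and> j < n then v i * v' j - v j * v' i else 0)"

definition ext_mult :: "nat \<Rightarrow> ('r::comm_ring_1) ostriple \<Rightarrow> 'r ostriple \<Rightarrow> 'r ostriple" where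
  "ext_mult n x y = (case x of (c, v, w) \<Rightarrow> case y of (c', v', w') \<Rightarrow>
      (c * c', \<lambda>i. c * v' i + c' * v i, \<lambda>i j. c * w' i j + c' * w i j + wedge n v v' i j))"

definition ext_add :: "('r::comm_ring_1) ostriple \<Rightarrow> 'r ostriple \<Rightarrow> 'r ostriple" where
  "ext_add x y = (case x of (c, v, w) \<Rightarrow> case y of (c', v', w') \<Rightarrow>
      (c + c', \<lambda>i. v i + v' i, \<lambda>i j. w i j + w' i j))"

definition ext_ring :: "nat \<Rightarrow> ('r::comm_ring_1) ostriple ring" where
  "ext_ring n = \<lparr>carrier = ext_carrier n, monoid.mult = ext_mult n,
                 one = (1, \<lambda>_. 0, \<lambda>_ _. 0), zero = (0, \<lambda>_. 0, \<lambda>_ _. 0), add = ext_add\<rparr>"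

definition unit_vec :: "nat \<Rightarrow> nat \<Rightarrow> 'r::comm_ring_1" where
  "unit_vec i = (\<lambda>k. if k = i then 1 else 0)"

definition ew :: "nat \<Rightarrow> nat \<Rightarrow> nat \<Rightarrow> nat \<Rightarrow> nat \<Rightarrow> 'r::comm_ring_1" where
  "ew n i j = wedge n (unit_vec i) (unit_vec j)"

definition os_rel_gens :: "nat \<Rightarrow> (nat \<Rightarrow> cpoint set) \<Rightarrow> (nat \<Rightarrow> nat \<Rightarrow> 'r::comm_ring_1) set" where
  "os_rel_gens n L =
     {ew n i j | i j. i < n \<and> j < n \<and> parallel (L i) (L j)} \<union>
     {(\<lambda>a b. ew n i j a b - ew n i k a b + ew n j k a b) | i j k.
        i < n \<and> j < n \<and> k < n \<and> L i \<inter> L j \<inter> L k \<noteq> {}}"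

inductive_set r_span :: "(nat \<Rightarrow> nat \<Rightarrow> 'r::comm_ring_1) set \<Rightarrow> (nat \<Rightarrow> nat \<Rightarrow> 'r) set"
  for G where
  span_zero: "(\<lambda>_ _. 0) \<in> r_span G"
| span_add_gen: "w \<in> r_span G \<Longrightarrow> g \<in> G \<Longrightarrow> (\<lambda>a b. w a b + r * g a b) \<in> r_span G"

definition os_ideal :: "nat \<Rightarrow> (nat \<Rightarrow> cpoint set) \<Rightarrow> ('r::comm_ring_1) ostriple set" where
  "os_ideal n L = {(0, \<lambda>_. 0, w) | w. w \<in> r_span (os_rel_gens n L)}"

text \<open>A^*_R(A) = R \<oplus> A^1 \<oplus> \<Lambda>^2/I, with A^q = 0 for q \<ge> 3.\<close>
definition os_alg :: "nat \<Rightarrow> (nat \<Rightarrow> cpoint set) \<Rightarrow> ('r::comm_ring_1) ostriple set ring" where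
  "os_alg n L = ext_ring n Quot os_ideal n L"

definition os_gen :: "nat \<Rightarrow> (nat \<Rightarrow> cpoint set) \<Rightarrow> nat \<Rightarrow> ('r::comm_ring_1) ostriple set" where
  "os_gen n L i = a_r_coset (ext_ring n) (os_ideal n L) (0, unit_vec i, \<lambda>_ _. 0)"

definition os_scalar :: "nat \<Rightarrow> (nat \<Rightarrow> cpoint set) \<Rightarrow> 'r \<Rightarrow> ('r::comm_ring_1) ostriple set" where
  "os_scalar n L r = a_r_coset (ext_ring n) (os_ideal n L) (r, \<lambda>_. 0, \<lambda>_ _. 0)"

definition os_smult :: "nat \<Rightarrow> (nat \<Rightarrow> cpoint set) \<Rightarrow> 'r \<Rightarrow> ('r::comm_ring_1) ostriple set
    \<Rightarrow> 'r ostriple set" where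
  "os_smult n L r x = os_scalar n L r \<otimes>\<^bsub>os_alg n L\<^esub> x"

definition os_alg_homs :: "nat \<Rightarrow> (nat \<Rightarrow> cpoint set) \<Rightarrow> nat \<Rightarrow> (nat \<Rightarrow> cpoint set)
    \<Rightarrow> (('r::comm_ring_1) ostriple set \<Rightarrow> 'r ostriple set) set" where
  "os_alg_homs n L m M =
     {h. h \<in> ring_hom (os_alg n L) (os_alg m M) \<and>
         (\<forall>r x. x \<in> carrier (os_alg n L) \<longrightarrow> h (os_smult n L r x) = os_smult m M r (h x))}"

end

theory Submission
  imports Defs
begin

(*
  The homomorphism Delta_tot is induced by the map of generators e_i |-> e_(cls i).
  More generally, call a map f from the lines of an arrangement L to the lines of an
  arrangement C an arrangement morphism if it sends parallel lines to parallel lines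
  and concurrent triples to concurrent triples; every such f induces an R-algebra
  map of Orlik--Solomon algebras with e_i |-> e_(f i).
*)

lemma ext_ring_simps [simp]:
  "carrier (ext_ring n) = ext_carrier n"
  "mult (ext_ring n) = ext_mult n"
  "one (ext_ring n) = (1, \<lambda>_. 0, \<lambda>_ _. 0)"
  "zero (ext_ring n) = (0, \<lambda>_. 0, \<lambda>_ _. 0)"
  "add (ext_ring n) = ext_add"
  by (simp_all add: ext_ring_def)

lemma ext_carrier_iff: "(c, v, w) \<in> ext_carrier n \<longleftrightarrow>
   (\<forall>i. n \<le> i \<longrightarrow> v i = 0) \<and> (\<forall>i j. \<not> (i < j \<and> j < n) \<longrightarrow> w i j = 0)"
  by (simp add: ext_carrier_def)

lemma ext_add_simp [simp]:
  "ext_add (c, v, w) (c', v', w') = (c + c', \<lambda>i. v i + v' i, \<lambda>i j. w i j + w' i j)"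
  by (simp add: ext_add_def)

lemma ext_mult_simp [simp]: "ext_mult n (c, v, w) (c', v', w') =
      (c * c', \<lambda>i. c * v' i + c' * v i, \<lambda>i j. c * w' i j + c' * w i j + wedge n v v' i j)"
  by (simp add: ext_mult_def)

lemma wedge_out: "\<not> (i < j \<and> j < n) \<Longrightarrow> wedge n v v' i j = 0"
  by (auto simp add: wedge_def)

text \<open>All ring axioms are componentwise identities; associativity of the product
  uses that the wedge product is bilinear and everything of degree 3 vanishes.\<close>
lemma ext_ring: "ring (ext_ring (n::nat) :: ('r::comm_ring_1) ostriple ring)"
proof (rule ringI)
  show "abelian_group (ext_ring n :: 'r ostriple ring)"
  proof (rule abelian_groupI, goal_cases)
    case (1 x y) then show ?case by (cases x; cases y) (auto simp: ext_carrier_iff)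
  next
    case 2 then show ?case by (auto simp: ext_carrier_iff)
  next
    case (3 x y z) then show ?case by (cases x; cases y; cases z) (auto simp: algebra_simps)
  next
    case (4 x y) then show ?case by (cases x; cases y) (auto simp: algebra_simps)
  next
    case (5 x) then show ?case by (cases x) auto
  next
    case (6 x) then show ?case
      by (cases x) (auto simp: ext_carrier_iff
          intro!: bexI[of _ "(- fst x, \<lambda>i. - fst (snd x) i, \<lambda>i j. - snd (snd x) i j)"])
  qed
next
  show "monoid (ext_ring n :: 'r ostriple ring)"
  proof (rule monoidI, goal_cases)
    case (1 x y) then show ?case by (cases x; cases y) (auto simp: ext_carrier_iff wedge_out)
  next
    case 2 then show ?case by (auto simp: ext_carrier_iff)
  next
    case (3 x y z) then show ?case
      by (cases x; cases y; cases z) (auto simp: algebra_simps wedge_def fun_eq_iff)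
  next
    case (4 x) then show ?case by (cases x) (auto simp: wedge_def fun_eq_iff)
  next
    case (5 x) then show ?case by (cases x) (auto simp: wedge_def fun_eq_iff)
  qed
next
  fix x y z :: "'r ostriple"
  show "(x \<oplus>\<^bsub>ext_ring n\<^esub> y) \<otimes>\<^bsub>ext_ring n\<^esub> z
      = x \<otimes>\<^bsub>ext_ring n\<^esub> z \<oplus>\<^bsub>ext_ring n\<^esub> y \<otimes>\<^bsub>ext_ring n\<^esub> z"
    by (cases x; cases y; cases z) (auto simp: algebra_simps wedge_def fun_eq_iff)
  show "z \<otimes>\<^bsub>ext_ring n\<^esub> (x \<oplus>\<^bsub>ext_ring n\<^esub> y)
      = z \<otimes>\<^bsub>ext_ring n\<^esub> x \<oplus>\<^bsub>ext_ring n\<^esub> z \<otimes>\<^bsub>ext_ring n\<^esub> y"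
    by (cases x; cases y; cases z) (auto simp: algebra_simps wedge_def fun_eq_iff)
qed

lemma span_add: "w \<in> r_span G \<Longrightarrow> u \<in> r_span G \<Longrightarrow> (\<lambda>a b. u a b + w a b) \<in> r_span G"
proof (induction w rule: r_span.induct)
  case span_zero then show ?case by simp
next
  case (span_add_gen w g r)
  then have "(\<lambda>a b. (\<lambda>a b. u a b + w a b) a b + r * g a b) \<in> r_span G"
    by (intro r_span.span_add_gen) auto
  then show ?case by (simp add: add.assoc)
qed

lemma span_smult: "w \<in> r_span G \<Longrightarrow> (\<lambda>a b. c * w a b) \<in> r_span G"
proof (induction w rule: r_span.induct)
  case span_zero then show ?case by (simp add: r_span.span_zero)
next
  case (span_add_gen w g r)
  then have "(\<lambda>a b. (\<lambda>a b. c * w a b) a b + (c * r) * g a b) \<in> r_span G"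
    by (intro r_span.span_add_gen) auto
  then show ?case by (simp add: algebra_simps)
qed

lemma span_gen: "g \<in> G \<Longrightarrow> g \<in> r_span G"
  using r_span.span_add_gen[OF r_span.span_zero, of g G 1] by simp

lemma span_linear_image:
  assumes zero: "F (\<lambda>_ _. 0) = (\<lambda>_ _. 0)"
    and lin: "\<And>w g r. F (\<lambda>a b. w a b + r * g a b) = (\<lambda>a b. F w a b + r * F g a b)"
    and gens: "\<And>g. g \<in> G \<Longrightarrow> F g \<in> r_span G'"
    and w: "w \<in> r_span G"
  shows "F w \<in> r_span G'"
  using w
proof (induction w rule: r_span.induct)
  case span_zero then show ?case by (simp add: zero r_span.span_zero)
next
  case (span_add_gen w g r)
  then show ?case by (simp add: lin span_add span_smult gens)
qed

lemma span_vanishes: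
  assumes "\<forall>g\<in>G. \<forall>i j. \<not> P i j \<longrightarrow> g i j = 0" and "w \<in> r_span G" and "\<not> P i j"
  shows "w i j = 0"
  using assms(2,3) by (induction w rule: r_span.induct) (use assms(1) in auto)

lemma ew_out: "\<not> (a < b \<and> b < n) \<Longrightarrow> ew n i j a b = 0"
  by (auto simp add: ew_def wedge_def)

lemma ew_swap: "ew s q p a b = - ew s p q a b"
  by (simp add: ew_def wedge_def)

lemma ew_diag: "ew s p p a b = 0"
  by (simp add: ew_def wedge_def)

lemma os_ideal_subset: "os_ideal n L \<subseteq> ext_carrier n"
proof -
  have gens: "\<forall>g\<in>os_rel_gens n L. \<forall>i j. \<not> (i < j \<and> j < n) \<longrightarrow> g i j = 0"
    unfolding os_rel_gens_def by (auto simp: ew_out)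
  have vanish: "w i j = 0" if "w \<in> r_span (os_rel_gens n L)" "\<not> (i < j \<and> j < n)" for w i j
    using span_vanishes[where P = "\<lambda>i j. i < j \<and> j < n", OF gens that] .
  show ?thesis
  proof
    fix x assume "x \<in> os_ideal n L"
    then obtain w where x: "x = (0, \<lambda>_. 0, w)" and w: "w \<in> r_span (os_rel_gens n L)"
      unfolding os_ideal_def by blast
    show "x \<in> ext_carrier n"
      unfolding x ext_carrier_iff by (intro conjI allI impI refl vanish[OF w])
  qed
qed

text \<open>The relations live in degree 2, so multiplying by (c, v, u) only scales them by c.\<close>
lemma os_ideal_ideal: "ideal (os_ideal n L) (ext_ring n :: ('r::comm_ring_1) ostriple ring)"
proof -
  interpret ring "ext_ring n :: 'r ostriple ring" by (rule ext_ring)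
  have scaled: "(0, \<lambda>_. 0, \<lambda>a b. c * w a b) \<in> os_ideal n L"
    if "w \<in> r_span (os_rel_gens n L)" for w and c :: 'r
    unfolding os_ideal_def using span_smult[OF that] by blast
  show ?thesis
  proof (rule idealI)
    show "ring (ext_ring n :: 'r ostriple ring)" by (rule ext_ring)
  next
    show "subgroup (os_ideal n L) (add_monoid (ext_ring n :: 'r ostriple ring))"
    proof (rule add.subgroupI)
      show "os_ideal n L \<subseteq> carrier (ext_ring n :: 'r ostriple ring)"
        using os_ideal_subset by simp
      show "os_ideal n L \<noteq> {}" unfolding os_ideal_def using r_span.span_zero by blast
    next
      fix a :: "'r ostriple" assume a: "a \<in> os_ideal n L"
      then obtain w where w: "a = (0, \<lambda>_. 0, w)" "w \<in> r_span (os_rel_gens n L)"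
        unfolding os_ideal_def by blast
      have neg: "(0, \<lambda>_. 0, \<lambda>a b. - w a b) \<in> os_ideal n L"
        using scaled[OF w(2), of "-1"] by simp
      have "\<ominus>\<^bsub>ext_ring n\<^esub> a = (0, \<lambda>_. 0, \<lambda>a b. - w a b)"
        using a neg os_ideal_subset by (intro add.inv_equality) (auto simp: w)
      then show "\<ominus>\<^bsub>ext_ring n\<^esub> a \<in> os_ideal n L" using neg by simp
    next
      fix a b :: "'r ostriple" assume "a \<in> os_ideal n L" "b \<in> os_ideal n L"
      then show "a \<oplus>\<^bsub>ext_ring n\<^esub> b \<in> os_ideal n L"
        unfolding os_ideal_def by (auto intro: span_add)
    qed
  next
    fix a x :: "'r ostriple" assume a: "a \<in> os_ideal n L"
    obtain w where w: "a = (0, \<lambda>_. 0, w)" "w \<in> r_span (os_rel_gens n L)"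
      using a unfolding os_ideal_def by blast
    obtain c v u where x: "x = (c, v, u)" by (cases x)
    have "x \<otimes>\<^bsub>ext_ring n\<^esub> a = (0, \<lambda>_. 0, \<lambda>a b. c * w a b)"
         "a \<otimes>\<^bsub>ext_ring n\<^esub> x = (0, \<lambda>_. 0, \<lambda>a b. c * w a b)"
      by (simp_all add: w x wedge_def fun_eq_iff)
    then show "x \<otimes>\<^bsub>ext_ring n\<^esub> a \<in> os_ideal n L" "a \<otimes>\<^bsub>ext_ring n\<^esub> x \<in> os_ideal n L"
      using scaled[OF w(2)] by simp_all
  qed
qed

lemma (in ring_hom_ring) image_rcos_kernel:
  assumes I: "ideal I R" and ker: "I \<subseteq> a_kernel R S h" and x: "x \<in> carrier R"
  shows "h ` (I +> x) = {h x}"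
proof -
  interpret I: ideal I R by (rule I)
  have const: "h (i \<oplus> x) = h x" if i: "i \<in> I" for i
  proof -
    have "i \<in> carrier R" using I.a_Hcarr[OF i] .
    moreover have "h i = \<zero>\<^bsub>S\<^esub>" using subsetD[OF ker i] unfolding a_kernel_def' by simp
    ultimately have "h (i \<oplus> x) = \<zero>\<^bsub>S\<^esub> \<oplus>\<^bsub>S\<^esub> h x" using x by (simp only: hom_add)
    then show ?thesis using x by simp
  qed
  have "I +> x = (\<lambda>i. i \<oplus> x) ` I" unfolding a_r_coset_def' by auto
  then have "h ` (I +> x) = (\<lambda>i. h (i \<oplus> x)) ` I" by (simp only: image_image)
  also have "\<dots> = (\<lambda>_. h x) ` I" using const by (rule image_cong[OF refl])
  also have "\<dots> = {h x}" using additive_subgroup.zero_closed[OF ideal.axioms(1)[OF I]] by blast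
  finally show ?thesis .
qed

lemma (in ring_hom_ring) quotient_lift_hom:
  assumes I: "ideal I R" and ker: "I \<subseteq> a_kernel R S h"
  shows "(\<lambda>X. the_elem (h ` X)) \<in> ring_hom (R Quot I) S"
    and "\<And>x. x \<in> carrier R \<Longrightarrow> the_elem (h ` (I +> x)) = h x"
proof -
  interpret I: ideal I R by (rule I)
  show eval: "\<And>x. x \<in> carrier R \<Longrightarrow> the_elem (h ` (I +> x)) = h x"
    by (simp add: image_rcos_kernel[OF I ker])
  have coset: "\<exists>x\<in>carrier R. X = I +> x" if "X \<in> carrier (R Quot I)" for X
    using that unfolding FactRing_def A_RCOSETS_def' by simp
  show "(\<lambda>X. the_elem (h ` X)) \<in> ring_hom (R Quot I) S"
  proof (rule ring_hom_memI)
    fix X assume "X \<in> carrier (R Quot I)"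
    then obtain x where "x \<in> carrier R" "X = I +> x" using coset by blast
    then show "the_elem (h ` X) \<in> carrier S" by (simp add: eval)
  next
    fix X Y assume "X \<in> carrier (R Quot I)" "Y \<in> carrier (R Quot I)"
    then obtain x y where x: "x \<in> carrier R" "X = I +> x" and y: "y \<in> carrier R" "Y = I +> y"
      using coset by blast
    have "X \<otimes>\<^bsub>R Quot I\<^esub> Y = I +> (x \<otimes> y)"
      using I.rcoset_mult_add[OF x(1) y(1)] by (simp add: FactRing_def x y)
    then show "the_elem (h ` (X \<otimes>\<^bsub>R Quot I\<^esub> Y)) = the_elem (h ` X) \<otimes>\<^bsub>S\<^esub> the_elem (h ` Y)"
      by (simp add: eval x y)
    have "X \<oplus>\<^bsub>R Quot I\<^esub> Y = I +> (x \<oplus> y)"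
      using I.a_rcos_sum[OF x(1) y(1)] by (simp add: FactRing_def x y)
    then show "the_elem (h ` (X \<oplus>\<^bsub>R Quot I\<^esub> Y)) = the_elem (h ` X) \<oplus>\<^bsub>S\<^esub> the_elem (h ` Y)"
      by (simp add: eval x y)
  next
    show "the_elem (h ` \<one>\<^bsub>R Quot I\<^esub>) = \<one>\<^bsub>S\<^esub>"
      by (simp add: FactRing_def eval)
  qed
qed

text \<open>An index map f sends e_i to e_(f i): in degree 1 a coefficient vector v is pushed
  to the vector whose a-th entry is the sum of the v i with f i = a; in degree 2 a
  coefficient table w is pushed to the sum of the w i j (e_(f i) \<and> e_(f j)).\<close>

definition push1 :: "nat \<Rightarrow> nat \<Rightarrow> (nat \<Rightarrow> nat) \<Rightarrow> (nat \<Rightarrow> 'r::comm_ring_1) \<Rightarrow> nat \<Rightarrow> 'r" where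
  "push1 n s f v = (\<lambda>a. if a < s then (\<Sum>i<n. if f i = a then v i else 0) else 0)"

definition push2 :: "nat \<Rightarrow> nat \<Rightarrow> (nat \<Rightarrow> nat) \<Rightarrow> (nat \<Rightarrow> nat \<Rightarrow> 'r::comm_ring_1)
    \<Rightarrow> nat \<Rightarrow> nat \<Rightarrow> 'r" where
  "push2 n s f w = (\<lambda>a b. \<Sum>i<n. \<Sum>j<n. w i j * ew s (f i) (f j) a b)"

definition ext_push :: "nat \<Rightarrow> nat \<Rightarrow> (nat \<Rightarrow> nat) \<Rightarrow> ('r::comm_ring_1) ostriple \<Rightarrow> 'r ostriple" where
  "ext_push n s f x = (case x of (c, v, w) \<Rightarrow> (c, push1 n s f v, push2 n s f w))"

lemma ext_push_simp [simp]: "ext_push n s f (c, v, w) = (c, push1 n s f v, push2 n s f w)"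
  by (simp add: ext_push_def)

lemma push1_zero: "push1 n s f (\<lambda>_. 0) = (\<lambda>_. 0)"
  by (simp add: push1_def fun_eq_iff)

lemma push1_add: "push1 n s f (\<lambda>i. x i + y i) = (\<lambda>a. push1 n s f x a + push1 n s f y a)"
  by (auto simp: push1_def fun_eq_iff sum.distrib[symmetric] intro!: sum.cong)

lemma push1_smult: "push1 n s f (\<lambda>i. c * x i) = (\<lambda>a. c * push1 n s f x a)"
  by (auto simp: push1_def fun_eq_iff sum_distrib_left intro!: sum.cong)

lemmas push1_linear = push1_zero push1_add push1_smult

lemma push2_linear:
  "push2 n s f (\<lambda>_ _. 0) = (\<lambda>_ _. 0)"
  "push2 n s f (\<lambda>i j. x i j + y i j) = (\<lambda>a b. push2 n s f x a b + push2 n s f y a b)"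
  "push2 n s f (\<lambda>i j. x i j - y i j) = (\<lambda>a b. push2 n s f x a b - push2 n s f y a b)"
  "push2 n s f (\<lambda>i j. c * x i j) = (\<lambda>a b. c * push2 n s f x a b)"
  by (simp_all add: push2_def fun_eq_iff sum.distrib sum_subtractf sum_distrib_left algebra_simps)

lemma push1_unit:
  assumes "i < n" "f i < s"
  shows "push1 n s f (unit_vec i) = unit_vec (f i)"
proof (rule ext)
  fix a
  have "(\<Sum>k<n. if f k = a then unit_vec i k else 0) = (\<Sum>k<n. if k = i then unit_vec (f i) a else 0)"
    by (intro sum.cong refl) (auto simp: unit_vec_def)
  also have "\<dots> = unit_vec (f i) a" using assms(1) by simp
  finally have sum: "(\<Sum>k<n. if f k = a then unit_vec i k else 0) = unit_vec (f i) a" .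
  show "push1 n s f (unit_vec i) a = unit_vec (f i) a"
    unfolding push1_def sum using assms(2) by (simp add: unit_vec_def)
qed

text \<open>Summing an off-diagonal table over ordered pairs: the antisymmetrisation used when
  comparing the push-forward of a wedge with the wedge of push-forwards.\<close>
lemma sum_ordered_pairs:
  fixes T :: "nat \<Rightarrow> nat \<Rightarrow> 'r::comm_ring_1"
  assumes "\<And>i. T i i = 0"
  shows "(\<Sum>i<n. \<Sum>j<n. if i < j then T i j + T j i else 0) = (\<Sum>i<n. \<Sum>j<n. T i j)"
proof -
  have "(\<Sum>i<n. \<Sum>j<n. T i j)
      = (\<Sum>i<n. \<Sum>j<n. (if i < j then T i j else 0) + (if j < i then T i j else 0))"
    by (intro sum.cong refl) (auto simp: assms dest: not_less_iff_gr_or_eq[THEN iffD1])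
  also have "\<dots> = (\<Sum>i<n. \<Sum>j<n. if i < j then T i j else 0)
                 + (\<Sum>i<n. \<Sum>j<n. if j < i then T i j else 0)"
    by (simp add: sum.distrib)
  also have "(\<Sum>i<n. \<Sum>j<n. if j < i then T i j else 0) = (\<Sum>j<n. \<Sum>i<n. if j < i then T i j else 0)"
    by (rule sum.swap)
  also have "(\<Sum>i<n. \<Sum>j<n. if i < j then T i j else 0) + (\<Sum>j<n. \<Sum>i<n. if j < i then T i j else 0)
      = (\<Sum>i<n. \<Sum>j<n. if i < j then T i j + T j i else 0)"
    by (simp add: sum.distrib[symmetric]) (intro sum.cong refl; simp)
  finally show ?thesis ..
qed

lemma push2_wedge:
  fixes v v' :: "nat \<Rightarrow> 'r::comm_ring_1"
  shows "push2 n s f (wedge n v v') = wedge s (push1 n s f v) (push1 n s f v')"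
proof (intro ext)
  fix a b
  define E :: "nat \<Rightarrow> nat \<Rightarrow> 'r" where "E i j = ew s (f i) (f j) a b" for i j
  define T where "T i j = v i * v' j * E i j" for i j
  have "push2 n s f (wedge n v v') a b = (\<Sum>i<n. \<Sum>j<n. if i < j then T i j + T j i else 0)"
    unfolding push2_def
  proof (intro sum.cong refl)
    fix i j assume "j \<in> {..<n}"
    have "E j i = - E i j" unfolding E_def by (rule ew_swap)
    then show "wedge n v v' i j * ew s (f i) (f j) a b = (if i < j then T i j + T j i else 0)"
      using \<open>j \<in> {..<n}\<close> by (simp add: E_def[symmetric] T_def wedge_def algebra_simps)
  qed
  also have "\<dots> = (\<Sum>i<n. \<Sum>j<n. T i j)"
    by (rule sum_ordered_pairs) (simp add: T_def E_def ew_diag)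
  also have "\<dots> = wedge s (push1 n s f v) (push1 n s f v') a b"
  proof (cases "a < b \<and> b < s")
    case True
    let ?P = "\<lambda>u c i. if f i = c then u i else 0"
    have E: "E i j = (if f i = a \<and> f j = b then 1 else 0) - (if f i = b \<and> f j = a then 1 else 0)"
      for i j using True by (auto simp: E_def ew_def wedge_def unit_vec_def)
    have "wedge s (push1 n s f v) (push1 n s f v') a b
        = (\<Sum>i<n. ?P v a i) * (\<Sum>j<n. ?P v' b j) - (\<Sum>i<n. ?P v b i) * (\<Sum>j<n. ?P v' a j)"
      using True by (simp add: wedge_def push1_def)
    also have "\<dots> = (\<Sum>i<n. \<Sum>j<n. ?P v a i * ?P v' b j - ?P v b i * ?P v' a j)"
      by (simp add: sum_product sum_subtractf)
    also have "\<dots> = (\<Sum>i<n. \<Sum>j<n. T i j)"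
      unfolding T_def E by (intro sum.cong refl) (auto simp: algebra_simps)
    finally show ?thesis ..
  next
    case False
    then have "E i j = 0" for i j by (simp add: E_def ew_out)
    then show ?thesis using False by (auto simp: T_def wedge_def)
  qed
  finally show "push2 n s f (wedge n v v') a b = wedge s (push1 n s f v) (push1 n s f v') a b" .
qed

lemma push2_ew:
  assumes "i < n" "j < n" "f i < s" "f j < s"
  shows "push2 n s f (ew n i j) = ew s (f i) (f j)"
  using assms by (simp add: ew_def push2_wedge push1_unit)

lemma ext_push_hom:
  "ext_push n s f \<in> ring_hom (ext_ring n :: ('r::comm_ring_1) ostriple ring) (ext_ring s)"
proof (rule ring_hom_memI)
  fix x :: "'r ostriple"
  obtain c v w where x: "x = (c, v, w)" by (cases x)
  show "ext_push n s f x \<in> carrier (ext_ring s)"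
    by (auto simp: x ext_carrier_iff push1_def push2_def ew_out)
next
  fix x y :: "'r ostriple"
  obtain c v w where x: "x = (c, v, w)" by (cases x)
  obtain c' v' w' where y: "y = (c', v', w')" by (cases y)
  show "ext_push n s f (x \<otimes>\<^bsub>ext_ring n\<^esub> y) = ext_push n s f x \<otimes>\<^bsub>ext_ring s\<^esub> ext_push n s f y"
    by (simp add: x y push1_linear push2_linear push2_wedge)
  show "ext_push n s f (x \<oplus>\<^bsub>ext_ring n\<^esub> y) = ext_push n s f x \<oplus>\<^bsub>ext_ring s\<^esub> ext_push n s f y"
    by (simp add: x y push1_linear push2_linear)
next
  show "ext_push n s f \<one>\<^bsub>ext_ring n\<^esub> = (\<one>\<^bsub>ext_ring s\<^esub> :: 'r ostriple)"
    by (simp add: push1_linear push2_linear)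
qed

definition arrangement_morphism ::
  "nat \<Rightarrow> (nat \<Rightarrow> cpoint set) \<Rightarrow> nat \<Rightarrow> (nat \<Rightarrow> cpoint set) \<Rightarrow> (nat \<Rightarrow> nat) \<Rightarrow> bool" where
  "arrangement_morphism n L s C f \<longleftrightarrow>
     (\<forall>i<n. f i < s) \<and>
     (\<forall>i<n. \<forall>j<n. parallel (L i) (L j) \<longrightarrow> parallel (C (f i)) (C (f j))) \<and>
     (\<forall>i<n. \<forall>j<n. \<forall>k<n. L i \<inter> L j \<inter> L k \<noteq> {} \<longrightarrow> C (f i) \<inter> C (f j) \<inter> C (f k) \<noteq> {})"

lemma push2_rel_gen:
  assumes f: "arrangement_morphism n L s C f" and g: "g \<in> os_rel_gens n L"
  shows "push2 n s f g \<in> (os_rel_gens s C :: (nat \<Rightarrow> nat \<Rightarrow> 'r::comm_ring_1) set)"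
proof -
  have bound: "\<And>i. i < n \<Longrightarrow> f i < s" using f by (simp add: arrangement_morphism_def)
  consider (par) i j where "g = ew n i j" "i < n" "j < n" "parallel (L i) (L j)"
    | (conc) i j k where "g = (\<lambda>a b. ew n i j a b - ew n i k a b + ew n j k a b)"
        "i < n" "j < n" "k < n" "L i \<inter> L j \<inter> L k \<noteq> {}"
    using g unfolding os_rel_gens_def by fast
  then show ?thesis
  proof cases
    case par
    have "push2 n s f g = ew s (f i) (f j)" using par bound by (simp add: push2_ew)
    moreover have "parallel (C (f i)) (C (f j))"
      using f par by (simp add: arrangement_morphism_def)
    ultimately show ?thesis unfolding os_rel_gens_def
      by (intro UnI1 CollectI exI[of _ "f i"] exI[of _ "f j"] conjI bound par)
  next
    case conc
    have "push2 n s f g = (\<lambda>a b. ew s (f i) (f j) a b - ew s (f i) (f k) a b + ew s (f j) (f k) a b)"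
      using conc bound by (simp add: push2_linear push2_ew)
    moreover have "C (f i) \<inter> C (f j) \<inter> C (f k) \<noteq> {}"
      using f conc by (simp add: arrangement_morphism_def)
    ultimately show ?thesis unfolding os_rel_gens_def
      by (intro UnI2 CollectI exI[of _ "f i"] exI[of _ "f j"] exI[of _ "f k"] conjI bound conc)
  qed
qed

lemma ext_push_os_ideal:
  assumes "arrangement_morphism n L s C f"
  shows "ext_push n s f ` (os_ideal n L :: ('r::comm_ring_1) ostriple set) \<subseteq> os_ideal s C"
proof -
  have "push2 n s f w \<in> r_span (os_rel_gens s C)" if "w \<in> r_span (os_rel_gens n L)"
    for w :: "nat \<Rightarrow> nat \<Rightarrow> 'r"
    by (rule span_linear_image[where F = "push2 n s f", OF _ _ _ that])
      (simp_all add: push2_linear span_gen push2_rel_gen[OF assms])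
  then show ?thesis unfolding os_ideal_def by (auto simp: push1_linear)
qed

definition os_push :: "nat \<Rightarrow> (nat \<Rightarrow> cpoint set) \<Rightarrow> nat \<Rightarrow> (nat \<Rightarrow> cpoint set) \<Rightarrow> (nat \<Rightarrow> nat)
    \<Rightarrow> ('r::comm_ring_1) ostriple set \<Rightarrow> 'r ostriple set" where
  "os_push n L s C f X = the_elem ((\<lambda>x. os_ideal s C +>\<^bsub>ext_ring s\<^esub> ext_push n s f x) ` X)"

text \<open>It is well defined and a ring homomorphism because the composite of the push-forward
  with the projection kills the source ideal.\<close>
lemma os_push_hom:
  assumes f: "arrangement_morphism n L s C f"
  shows "os_push n L s C f \<in> ring_hom (os_alg n L :: ('r::comm_ring_1) ostriple set ring) (os_alg s C)"
    and "\<And>x. x \<in> ext_carrier n \<Longrightarrow> os_push n L s C f (os_ideal n L +>\<^bsub>ext_ring n\<^esub> x)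
           = (os_ideal s C +>\<^bsub>ext_ring s\<^esub> ext_push n s f x :: 'r ostriple set)"
proof -
  let ?I = "os_ideal n L :: 'r ostriple set" and ?J = "os_ideal s C :: 'r ostriple set"
  define q where "q x = ?J +>\<^bsub>ext_ring s\<^esub> ext_push n s f x" for x :: "'r ostriple"
  interpret J: ideal ?J "ext_ring s" by (rule os_ideal_ideal)
  have "q \<in> ring_hom (ext_ring n) (os_alg s C)"
    unfolding q_def os_alg_def using ring_hom_trans[OF ext_push_hom J.rcos_ring_hom]
    by (simp add: comp_def)
  then interpret q: ring_hom_ring "ext_ring n" "os_alg s C" q
    by (intro ring_hom_ringI2 ext_ring) (simp_all add: os_alg_def J.quotient_is_ring)
  have kernel: "?I \<subseteq> a_kernel (ext_ring n) (os_alg s C) q"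
  proof
    fix x assume x: "x \<in> ?I"
    then have "ext_push n s f x \<in> ?J" using ext_push_os_ideal[OF f] by blast
    then have "q x = \<zero>\<^bsub>os_alg s C\<^esub>" by (simp add: q_def os_alg_def FactRing_def J.a_rcos_const)
    then show "x \<in> a_kernel (ext_ring n) (os_alg s C) q"
      using x os_ideal_subset unfolding a_kernel_def' by auto
  qed
  note lift = q.quotient_lift_hom[OF os_ideal_ideal kernel]
  show "os_push n L s C f \<in> ring_hom (os_alg n L :: 'r ostriple set ring) (os_alg s C)"
    using lift(1) unfolding os_push_def[abs_def] q_def[abs_def] by (simp add: os_alg_def)
  show "os_push n L s C f (?I +>\<^bsub>ext_ring n\<^esub> x) = ?J +>\<^bsub>ext_ring s\<^esub> ext_push n s f x"
    if "x \<in> ext_carrier n" for x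
    using lift(2) that by (simp add: os_push_def q_def[abs_def])
qed

lemma os_scalar_carrier: "os_scalar n L r \<in> carrier (os_alg n L :: ('r::comm_ring_1) ostriple set ring)"
proof -
  interpret I: ideal "os_ideal n L :: 'r ostriple set" "ext_ring n" by (rule os_ideal_ideal)
  have "(r, \<lambda>_. 0, \<lambda>_ _. 0) \<in> carrier (ext_ring n :: 'r ostriple ring)"
    by (simp add: ext_carrier_iff)
  then show ?thesis unfolding os_scalar_def os_alg_def FactRing_def
    using I.a_rcosetsI[OF I.a_subset] by simp
qed

lemma os_alg_hom_of_morphism:
  assumes f: "arrangement_morphism n L s C f"
  shows "\<exists>\<Delta>. \<Delta> \<in> (os_alg_homs n L s C :: ('r::comm_ring_1 ostriple set \<Rightarrow> 'r ostriple set) set) \<and>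
             (\<forall>i<n. \<Delta> (os_gen n L i) = os_gen s C (f i))"
proof -
  let ?\<Delta> = "os_push n L s C f :: 'r ostriple set \<Rightarrow> 'r ostriple set"
  note hom = os_push_hom(1)[OF f] and on_cosets = os_push_hom(2)[OF f]
  have scalar: "?\<Delta> (os_scalar n L r) = os_scalar s C r" for r :: 'r
    unfolding os_scalar_def by (simp add: on_cosets ext_carrier_iff push1_linear push2_linear)
  have linear: "?\<Delta> (os_smult n L r x) = os_smult s C r (?\<Delta> x)"
    if "x \<in> carrier (os_alg n L)" for r :: 'r and x
    unfolding os_smult_def ring_hom_mult[OF hom os_scalar_carrier that] scalar ..
  have gens: "?\<Delta> (os_gen n L i) = os_gen s C (f i)" if i: "i < n" for i
  proof -
    have fi: "f i < s" using i f by (simp add: arrangement_morphism_def)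
    have e: "(0, unit_vec i, \<lambda>_ _. 0) \<in> ext_carrier n"
      using i by (simp add: ext_carrier_iff unit_vec_def)
    show ?thesis unfolding os_gen_def on_cosets[OF e]
      by (simp add: push1_unit[where f = f, OF i fi] push2_linear)
  qed
  show ?thesis using hom linear gens unfolding os_alg_homs_def by blast
qed

text \<open>Parallelism in the sense of the definitions includes equality.\<close>
lemma parallel_refl: "parallel S S"
  unfolding parallel_def by (intro exI[of _ 0]) simp

text \<open>Sending each line to its parallel class, with the classes realised by concurrent
  lines: parallel lines go to the same line, and any three central lines meet at 0.\<close>
lemma parallel_class_map_morphism:
  assumes cls: "parallel_class_decomposition n L s cls" and C: "central_arrangement s C"
  shows "arrangement_morphism n L s C cls"
proof -
  have bound: "\<forall>i<n. cls i < s" using cls by (simp add: parallel_class_decomposition_def)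
  have "parallel (C (cls i)) (C (cls j))" if "i < n" "j < n" "parallel (L i) (L j)" for i j
  proof -
    have "cls i = cls j" using cls that by (simp add: parallel_class_decomposition_def)
    then show ?thesis by (simp add: parallel_refl)
  qed
  moreover have "C (cls i) \<inter> C (cls j) \<inter> C (cls k) \<noteq> {}" if "i < n" "j < n" "k < n" for i j k
  proof -
    have "(0, 0) \<in> C (cls i) \<inter> C (cls j) \<inter> C (cls k)"
      using C bound that by (simp add: central_arrangement_def)
    then show ?thesis by blast
  qed
  ultimately show ?thesis using bound by (simp add: arrangement_morphism_def)
qed

theorem theorem3p1:
  fixes n s :: nat and L C :: "nat \<Rightarrow> cpoint set" and cls :: "nat \<Rightarrow> nat"
  assumes "line_arrangement n L"
    and "parallel_class_decomposition n L s cls"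
    and "central_arrangement s C"
  shows "\<exists>\<Delta>. \<Delta> \<in> (os_alg_homs n L s C :: ('r::comm_ring_1 ostriple set \<Rightarrow> 'r ostriple set) set) \<and>
             (\<forall>i<n. \<Delta> (os_gen n L i) = os_gen s C (cls i))"
  using os_alg_hom_of_morphism[OF parallel_class_map_morphism[OF assms(2,3)]] .

end
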